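(* Let $-1 \le a < b \le 1$, and set $\alpha = \arccos a$, $\beta = \arccos b$ (so $0 \le \beta < \alpha \le \pi$). Define $g:[0,\pi]\to\mathbb{R}$ by $g(\theta)=1$ for $\theta\in(\beta,\alpha)$, $g(\theta)=\tfrac12$ for $\theta\in\{\alpha,\beta\}$, and $g(\theta)=0$ for $\theta\in[0,\pi]\setminus[\beta,\alpha]$. Let \[ c_0=\frac{1}{\pi}(\alpha-\beta),\qquad c_j=\frac{2}{\pi}\cdot\frac{\sin(j\alpha)-\sin(j\beta)}{j}\quad (j\ge 1), \] and for $k\ge 1$ let $g_k(\theta)=\sum_{j=0}^k c_j\cos(j\theta)$. Then for every integer $k \ge 1$ and every $\theta\in[0,\pi]$, \[ |g(\theta)-g_k(\theta)|\le \frac{J(\theta)}{\pi(k+1)}, \] where \[ J(\theta)=\begin{cases} \frac{1}{|\sin\frac{\theta+\alpha}{2}|}+\frac{1}{|\sin\frac{\theta-\alpha}{2}|}+\frac{1}{|\sin\frac{\theta+\beta}{2}|}+\frac{1}{|\sin\frac{\theta-\beta}{2}|}, & \theta\ne\alpha,\beta,\\[4pt] \frac{1}{|\sin\alpha|}+\frac{1}{|\sin\frac{\alpha+\beta}{2}|}+\frac{1}{|\sin\frac{\alpha-\beta}{2}|}, & \theta=\alpha,\\[4pt] \frac{1}{|\sin\beta|}+\frac{1}{|\sin\frac{\alpha+\beta}{2}|}+\frac{1}{|\sin\frac{\alpha-\beta}{2}|}, & \theta=\beta. \end{cases} \]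
   Context: Any term of the form $1/0$ in $J(\theta)$ is interpreted as $+\infty$, in which case the bound holds trivially. The function $g$ is $s(\cos\theta)$ where $s$ is the step function equal to $1$ on $(a,b)$, $\tfrac12$ at $a,b$, and $0$ elsewhere on $[-1,1]$; $g_k$ is the $k$-th partial sum of its Fourier cosine series (equivalently, the degree-$k$ Chebyshev truncation of $s$). *)

theory Defs
  imports Complex_Main "HOL-Library.Extended_Real"
begin

definition inv_abs :: "real \<Rightarrow> ereal" where
  "inv_abs x = (if x = 0 then \<infinity> else ereal (1 / \<bar>x\<bar>))"

definition step_g :: "real \<Rightarrow> real \<Rightarrow> real \<Rightarrow> real" where
  "step_g \<alpha> \<beta> \<theta> =
     (if \<beta> < \<theta> \<and> \<theta> < \<alpha> then 1
      else if \<theta> = \<alpha> \<or> \<theta> = \<beta> then 1/2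
      else 0)"

definition cheb_coeff :: "real \<Rightarrow> real \<Rightarrow> nat \<Rightarrow> real" where
  "cheb_coeff \<alpha> \<beta> j =
     (if j = 0 then (\<alpha> - \<beta>) / pi
      else 2 / pi * ((sin (real j * \<alpha>) - sin (real j * \<beta>)) / real j))"

definition g_partial :: "real \<Rightarrow> real \<Rightarrow> nat \<Rightarrow> real \<Rightarrow> real" where
  "g_partial \<alpha> \<beta> k \<theta> = (\<Sum>j=0..k. cheb_coeff \<alpha> \<beta> j * cos (real j * \<theta>))"

definition J_bound :: "real \<Rightarrow> real \<Rightarrow> real \<Rightarrow> ereal" where
  "J_bound \<alpha> \<beta> \<theta> =
     (if \<theta> = \<alpha> then
        inv_abs (sin \<alpha>) + inv_abs (sin ((\<alpha> + \<beta>) / 2)) + inv_abs (sin ((\<alpha> - \<beta>) / 2))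
      else if \<theta> = \<beta> then
        inv_abs (sin \<beta>) + inv_abs (sin ((\<alpha> + \<beta>) / 2)) + inv_abs (sin ((\<alpha> - \<beta>) / 2))
      else
        inv_abs (sin ((\<theta> + \<alpha>) / 2)) + inv_abs (sin ((\<theta> - \<alpha>) / 2))
        + inv_abs (sin ((\<theta> + \<beta>) / 2)) + inv_abs (sin ((\<theta> - \<beta>) / 2)))"

end

theory Submission
  imports Defs
begin

text \<open>
  Let \<open>s\<close> be the odd sawtooth with \<open>s x = (pi - x)/2\<close> on \<open>(0, 2 pi)\<close> and \<open>s 0 = 0\<close>, and
  \<open>S\<^sub>k x = (\<Sum>j=1..k. sin (j x) / j)\<close> its Fourier partial sums. The product-to-sum formula
  \<open>2 sin (j a) cos (j \<theta>) = sin (j (a + \<theta>)) + sin (j (a - \<theta>))\<close> writes \<open>g\<close> and \<open>g\<^sub>k\<close> as the same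
  combination of \<open>s\<close>, resp. \<open>S\<^sub>k\<close>, at \<open>\<alpha> \<plusminus> \<theta>\<close> and \<open>\<beta> \<plusminus> \<theta>\<close>, so \<open>g - g\<^sub>k\<close> is \<open>1/pi\<close> times a
  signed sum of four remainders \<open>s x - S\<^sub>k x\<close>. Since the partial sums of \<open>sin (j x)\<close> are bounded
  by \<open>1 / \<bar>sin (x/2)\<bar>\<close>, Abel summation bounds every block \<open>S\<^sub>n x - S\<^sub>k x\<close> by
  \<open>1 / ((k + 1) \<bar>sin (x/2)\<bar>)\<close>, and letting \<open>n \<rightarrow> \<infinity>\<close> bounds the remainder in the same way.
  That \<open>S\<^sub>n\<close> converges to \<open>s\<close> at all is seen by integrating the Dirichlet kernel by parts.
\<close>

lemma sin_half_mult_sum_cos: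
  "2 * sin (x/2) * (1/2 + (\<Sum>j=1..n. cos (real j * x))) = sin ((real n + 1/2) * x)"
proof (induction n)
  case 0
  then show ?case by (simp add: mult.commute)
next
  case (Suc n)
  have "sin ((real n + 3/2) * x) - sin ((real n + 1/2) * x) = 2 * sin (x/2) * cos (real (Suc n) * x)"
    by (simp add: sin_diff_sin algebra_simps add_divide_distrib)
  with Suc show ?case by (simp add: algebra_simps)
qed

lemma sin_half_mult_sum_sin:
  assumes "m \<le> n"
  shows "2 * sin (x/2) * (\<Sum>j=m..n. sin (real j * x)) = cos ((real m - 1/2) * x) - cos ((real n + 1/2) * x)"
  using assms
proof (induction n rule: dec_induct)
  case base
  show ?case by (simp add: cos_diff_cos algebra_simps diff_divide_distrib add_divide_distrib)
next
  case (step n)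
  have "cos ((real n + 1/2) * x) - cos ((real n + 3/2) * x) = 2 * sin (x/2) * sin (real (Suc n) * x)"
    by (simp add: cos_diff_cos algebra_simps add_divide_distrib)
  with step show ?case by (simp add: algebra_simps)
qed

lemma abs_sum_sin_le:
  assumes "sin (x/2) \<noteq> 0"
  shows "\<bar>\<Sum>j=m..n. sin (real j * x)\<bar> \<le> 1 / \<bar>sin (x/2)\<bar>"
proof (cases "m \<le> n")
  case True
  have "\<bar>cos ((real m - 1/2) * x) - cos ((real n + 1/2) * x)\<bar> \<le> 2"
    using abs_cos_le_one[of "(real m - 1/2) * x"] abs_cos_le_one[of "(real n + 1/2) * x"] by linarith
  then have "\<bar>sin (x/2)\<bar> * \<bar>\<Sum>j=m..n. sin (real j * x)\<bar> \<le> 1"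
    unfolding sin_half_mult_sum_sin[OF True, symmetric] by (simp add: abs_mult)
  then show ?thesis using assms by (simp add: field_simps)
qed simp

lemma abs_sum_mult_decreasing_le:
  fixes a b :: "nat \<Rightarrow> real"
  assumes decreasing: "\<And>j. m \<le> j \<Longrightarrow> b (Suc j) \<le> b j"
    and nonneg: "\<And>j. m \<le> j \<Longrightarrow> 0 \<le> b j"
    and partial_sums: "\<And>n. \<bar>\<Sum>j=m..n. a j\<bar> \<le> M"
  shows "\<bar>\<Sum>j=m..n. a j * b j\<bar> \<le> M * b m"
proof (cases "m \<le> n")
  case False
  have "0 \<le> M" using partial_sums[of 0] by linarith
  with False nonneg[of m] show ?thesis by simp
next
  case True
  have "\<bar>(\<Sum>j=m..n. a j * b j) - (\<Sum>j=m..n. a j) * b n\<bar> \<le> M * (b m - b n)"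
    using True
  proof (induction n rule: dec_induct)
    case (step n)
    have "\<bar>(\<Sum>j=m..n. a j) * (b n - b (Suc n))\<bar> \<le> M * (b n - b (Suc n))"
      using partial_sums[of n] decreasing[OF step.hyps(1)] by (simp add: abs_mult mult_right_mono)
    with step show ?case by (simp add: algebra_simps)
  qed simp
  moreover have "\<bar>(\<Sum>j=m..n. a j) * b n\<bar> \<le> M * b n"
    using partial_sums[of n] nonneg[OF True] by (simp add: abs_mult mult_right_mono)
  ultimately show ?thesis by (simp add: algebra_simps)
qed

lemma abs_diff_le_diff_if_abs_deriv_le:
  fixes f g :: "real \<Rightarrow> real"
  assumes "a \<le> b"
    and "\<And>t. a \<le> t \<Longrightarrow> t \<le> b \<Longrightarrow> (f has_real_derivative f' t) (at t)"
    and "\<And>t. a \<le> t \<Longrightarrow> t \<le> b \<Longrightarrow> (g has_real_derivative g' t) (at t)"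
    and "\<And>t. a \<le> t \<Longrightarrow> t \<le> b \<Longrightarrow> \<bar>f' t\<bar> \<le> g' t"
  shows "\<bar>f b - f a\<bar> \<le> g b - g a"
proof -
  have "g a - f a \<le> g b - f b"
    by (rule DERIV_nonneg_imp_nondecreasing[OF assms(1)])
      (use assms(2-4) in \<open>fastforce intro!: DERIV_diff simp: abs_le_iff\<close>)
  moreover have "g a + f a \<le> g b + f b"
    by (rule DERIV_nonneg_imp_nondecreasing[OF assms(1)])
      (use assms(2-4) in \<open>fastforce intro!: DERIV_add simp: abs_le_iff\<close>)
  ultimately show ?thesis by linarith
qed

text \<open>Only the values on \<open>(-2 pi, 2 pi)\<close> matter; there this is the \<open>2 pi\<close>-periodic sawtooth,
  with the midpoint value at its jump.\<close>
definition sawtooth :: "real \<Rightarrow> real" where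
  "sawtooth x = (if x = 0 then 0 else if 0 < x then (pi - x)/2 else - (pi + x)/2)"

definition sawtooth_sum :: "nat \<Rightarrow> real \<Rightarrow> real" where
  "sawtooth_sum n x = (\<Sum>j=1..n. sin (real j * x) / real j)"

lemma sawtooth_minus: "sawtooth (-x) = - sawtooth x"
  by (auto simp: sawtooth_def field_simps)

lemma sawtooth_sum_minus: "sawtooth_sum n (-x) = - sawtooth_sum n x"
  by (simp add: sawtooth_sum_def sum_negf)

lemma sawtooth_sum_reflect: "sawtooth_sum n (2*pi - x) = - sawtooth_sum n x"
proof -
  have "sin (real j * (2*pi - x)) = - sin (real j * x)" for j
  proof -
    have "real j * (2*pi - x) = 2 * real j * pi - real j * x" by (simp add: algebra_simps)
    then show ?thesis by (simp add: sin_diff)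
  qed
  then show ?thesis by (simp add: sawtooth_sum_def sum_negf)
qed

lemma sawtooth_sum_pi: "sawtooth_sum n pi = 0"
  by (simp add: sawtooth_sum_def sin_npi)

lemma has_real_derivative_sawtooth_sum:
  assumes "sin (t/2) \<noteq> 0"
  shows "(sawtooth_sum n has_real_derivative sin ((real n + 1/2) * t) / (2 * sin (t/2)) - 1/2) (at t)"
proof -
  have "((\<lambda>x. \<Sum>j=1..n. sin (real j * x) / real j) has_real_derivative (\<Sum>j=1..n. cos (real j * t))) (at t)"
    by (rule derivative_eq_intros refl | simp)+
  moreover have "(\<Sum>j=1..n. cos (real j * t)) = sin ((real n + 1/2) * t) / (2 * sin (t/2)) - 1/2"
    using sin_half_mult_sum_cos[of t n] assms by (simp add: field_simps)
  ultimately show ?thesis by (simp add: sawtooth_sum_def[abs_def])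
qed

lemma abs_sawtooth_sum_error_le:
  assumes "0 < x" "x \<le> pi"
  shows "\<bar>sawtooth_sum n x - (pi - x)/2\<bar> \<le> 1 / ((real n + 1/2) * sin (x/2))"
proof -
  define N where "N = real n + 1/2"
  have "N > 0" by (simp add: N_def)
  have sin_pos: "0 < sin (t/2)" if "x \<le> t" "t \<le> pi" for t
    using that assms by (intro sin_gt_zero) auto
  \<comment> \<open>the remainder corrected by the boundary term of integrating the Dirichlet kernel
    \<open>sin (N t) / (2 sin (t/2))\<close> by parts; its derivative is only of order \<open>1/N\<close>\<close>
  define f where "f t = sawtooth_sum n t - (pi - t)/2 + cos (N*t) / (2*N*sin (t/2))" for t
  define g where "g t = - 1 / (2*N*sin (t/2))" for t
  have "\<bar>f pi - f x\<bar> \<le> g pi - g x"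
  proof (rule abs_diff_le_diff_if_abs_deriv_le[OF assms(2)])
    fix t assume t: "x \<le> t" "t \<le> pi"
    have "0 \<le> cos (t/2)" using t assms by (intro cos_ge_zero) auto
    then show "\<bar>- cos (N*t) * cos (t/2) / (4*N*sin (t/2)^2)\<bar> \<le> cos (t/2) / (4*N*sin (t/2)^2)"
      using \<open>N > 0\<close> by (simp add: abs_mult divide_right_mono mult_left_le_one_le)
    show "(f has_real_derivative - cos (N*t) * cos (t/2) / (4*N*sin (t/2)^2)) (at t)"
      using sin_pos[OF t] \<open>N > 0\<close> has_real_derivative_sawtooth_sum[of t n]
      unfolding f_def[abs_def] N_def[symmetric]
      by (auto intro!: derivative_eq_intros simp: field_simps power2_eq_square)
    show "(g has_real_derivative cos (t/2) / (4*N*sin (t/2)^2)) (at t)"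
      using sin_pos[OF t] \<open>N > 0\<close> unfolding g_def[abs_def]
      by (auto intro!: derivative_eq_intros simp: field_simps power2_eq_square)
  qed
  moreover have "f pi = 0"
  proof -
    have "N * pi = real n * pi + pi/2" by (simp add: N_def algebra_simps)
    then show ?thesis by (simp add: f_def sawtooth_sum_pi cos_add sin_npi)
  qed
  moreover have "g pi = - (1 / (2*N))" "g x = - (1 / (2*N*sin (x/2)))"
    by (simp_all add: g_def)
  moreover have "0 < 1 / (2*N)" using \<open>N > 0\<close> by simp
  moreover have "\<bar>cos (N*x) / (2*N*sin (x/2))\<bar> \<le> 1 / (2*N*sin (x/2))"
    using \<open>N > 0\<close> sin_pos[of x] assms by (simp add: abs_mult divide_right_mono)
  ultimately have "\<bar>sawtooth_sum n x - (pi - x)/2\<bar> \<le> 1 / (2*N*sin (x/2)) + 1 / (2*N*sin (x/2))"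
    unfolding f_def[of x] by arith
  also have "\<dots> = 1 / ((real n + 1/2) * sin (x/2))"
    unfolding N_def[symmetric] by simp
  finally show ?thesis .
qed

lemma LIMSEQ_sawtooth_sum:
  assumes "\<bar>x\<bar> < 2*pi"
  shows "(\<lambda>n. sawtooth_sum n x) \<longlonglongrightarrow> sawtooth x"
proof -
  have first_half: "(\<lambda>n. sawtooth_sum n y) \<longlonglongrightarrow> (pi - y)/2" if "0 < y" "y \<le> pi" for y
  proof -
    have "(\<lambda>n. inverse (real n + 1/2)) \<longlonglongrightarrow> 0"
      by (intro tendsto_inverse_0_at_top filterlim_at_top_mono[OF filterlim_real_sequentially]) auto
    then have "(\<lambda>n. sawtooth_sum n y - (pi - y)/2) \<longlonglongrightarrow> 0"
      by (rule tendsto_0_le[where K = "1 / sin (y/2)"])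
        (use abs_sawtooth_sum_error_le[OF that] in \<open>simp add: field_simps\<close>)
    then show ?thesis by (simp add: LIM_zero_iff)
  qed
  have positive: "(\<lambda>n. sawtooth_sum n y) \<longlonglongrightarrow> (pi - y)/2" if "0 < y" "y < 2*pi" for y
  proof (cases "y \<le> pi")
    case False
    have "(\<lambda>n. - sawtooth_sum n (2*pi - y)) \<longlonglongrightarrow> - ((pi - (2*pi - y))/2)"
      using False that by (intro tendsto_minus first_half) auto
    also have "- ((pi - (2*pi - y))/2) = (pi - y)/2"
      by (simp add: field_simps)
    finally show ?thesis
      unfolding sawtooth_sum_reflect minus_minus .
  qed (use first_half that in auto)
  consider "x = 0" | "0 < x" | "x < 0" by linarith
  then show ?thesis
  proof cases
    case 1
    then show ?thesis by (simp add: sawtooth_def sawtooth_sum_def)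
  next
    case 2
    then show ?thesis using positive assms by (simp add: sawtooth_def)
  next
    case 3
    have "(\<lambda>n. - sawtooth_sum n (-x)) \<longlonglongrightarrow> - sawtooth (-x)"
      using 3 assms positive[of "-x"] by (intro tendsto_minus) (simp add: sawtooth_def)
    then show ?thesis by (simp add: sawtooth_sum_minus sawtooth_minus)
  qed
qed

lemma abs_sawtooth_sum_diff_le:
  assumes "sin (x/2) \<noteq> 0" "k \<le> n"
  shows "\<bar>sawtooth_sum n x - sawtooth_sum k x\<bar> \<le> 1 / ((real k + 1) * \<bar>sin (x/2)\<bar>)"
proof -
  have "sawtooth_sum n x - sawtooth_sum k x = (\<Sum>j=Suc k..n. sin (real j * x) * (1 / real j))"
    using sum.ub_add_nat[of 1 k "\<lambda>j. sin (real j * x) / real j" "n - k"] \<open>k \<le> n\<close>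
    by (simp add: sawtooth_sum_def)
  also have "\<bar>\<dots>\<bar> \<le> (1 / \<bar>sin (x/2)\<bar>) * (1 / real (Suc k))"
    by (rule abs_sum_mult_decreasing_le) (auto intro: divide_left_mono abs_sum_sin_le[OF assms(1)])
  finally show ?thesis by (simp add: field_simps)
qed

definition sawtooth_remainder :: "nat \<Rightarrow> real \<Rightarrow> real" where
  "sawtooth_remainder n x = sawtooth x - sawtooth_sum n x"

lemma abs_sawtooth_remainder_le:
  assumes "sin (x/2) \<noteq> 0" "\<bar>x\<bar> < 2*pi"
  shows "\<bar>sawtooth_remainder k x\<bar> \<le> 1 / ((real k + 1) * \<bar>sin (x/2)\<bar>)"
proof -
  have "(\<lambda>n. \<bar>sawtooth_sum n x - sawtooth_sum k x\<bar>) \<longlonglongrightarrow> \<bar>sawtooth x - sawtooth_sum k x\<bar>"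
    by (intro tendsto_intros LIMSEQ_sawtooth_sum assms(2))
  then show ?thesis
    unfolding sawtooth_remainder_def
    by (rule LIMSEQ_le_const2) (use abs_sawtooth_sum_diff_le[OF assms(1)] in auto)
qed

lemma ereal_sawtooth_remainder_le_inv_abs:
  assumes "\<bar>x\<bar> < 2*pi"
  shows "ereal ((real k + 1) * \<bar>sawtooth_remainder k x\<bar>) \<le> inv_abs (sin (x/2))"
proof (cases "x = 0")
  case False
  then have "sin (x/2) \<noteq> 0"
    using assms sin_zero_pi_iff[of "x/2"] by auto
  have "(real k + 1) * \<bar>sawtooth_remainder k x\<bar>
      \<le> (real k + 1) * (1 / ((real k + 1) * \<bar>sin (x/2)\<bar>))"
    by (rule mult_left_mono[OF abs_sawtooth_remainder_le[OF \<open>sin (x/2) \<noteq> 0\<close> assms]]) simp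
  with \<open>sin (x/2) \<noteq> 0\<close> show ?thesis by (simp add: inv_abs_def)
qed (simp add: inv_abs_def)

\<comment> \<open>For \<open>\<theta> = \<beta> = 0\<close> or \<open>\<theta> = \<alpha> = pi\<close> the value \<open>1/2\<close> of \<open>step_g\<close> is not the midpoint of the
  even \<open>2 pi\<close>-periodic extension, and the identity fails.\<close>
lemma step_g_eq_sawtooth:
  assumes "0 \<le> \<beta>" "\<beta> < \<alpha>" "\<alpha> \<le> pi" "0 \<le> \<theta>" "\<theta> \<le> pi"
    and "\<theta> = \<beta> \<longrightarrow> 0 < \<beta>" "\<theta> = \<alpha> \<longrightarrow> \<alpha> < pi"
  shows "step_g \<alpha> \<beta> \<theta> =
    (\<alpha> - \<beta>)/pi + (sawtooth (\<alpha>+\<theta>) + sawtooth (\<alpha>-\<theta>) - sawtooth (\<beta>+\<theta>) - sawtooth (\<beta>-\<theta>))/pi"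
proof -
  have plus: "sawtooth (\<alpha>+\<theta>) = (pi - \<alpha> - \<theta>)/2" "sawtooth (\<beta>+\<theta>) = (pi - \<beta> - \<theta>)/2"
    using assms by (auto simp: sawtooth_def)
  consider "\<theta> < \<beta>" | "\<theta> = \<beta>" | "\<beta> < \<theta> \<and> \<theta> < \<alpha>" | "\<theta> = \<alpha>" | "\<alpha> < \<theta>"
    by linarith
  then show ?thesis
    unfolding plus using assms by cases (simp_all add: step_g_def sawtooth_def field_simps)
qed

lemma g_partial_eq_sawtooth_sum:
  "g_partial \<alpha> \<beta> k \<theta> = (\<alpha> - \<beta>)/pi
     + (sawtooth_sum k (\<alpha>+\<theta>) + sawtooth_sum k (\<alpha>-\<theta>) - sawtooth_sum k (\<beta>+\<theta>) - sawtooth_sum k (\<beta>-\<theta>))/pi"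
proof -
  have "cheb_coeff \<alpha> \<beta> j * cos (real j * \<theta>) =
      (sin (real j * (\<alpha>+\<theta>)) / real j + sin (real j * (\<alpha>-\<theta>)) / real j
       - sin (real j * (\<beta>+\<theta>)) / real j - sin (real j * (\<beta>-\<theta>)) / real j) / pi"
    if "1 \<le> j" for j
  proof -
    have "cheb_coeff \<alpha> \<beta> j * cos (real j * \<theta>)
        = 2 * (sin (real j * \<alpha>) * cos (real j * \<theta>) - sin (real j * \<beta>) * cos (real j * \<theta>)) / real j / pi"
      using that by (simp add: cheb_coeff_def field_simps)
    then show ?thesis
      by (simp add: sin_times_cos distrib_left right_diff_distrib diff_divide_distrib add_divide_distrib)
  qed
  moreover have "g_partial \<alpha> \<beta> k \<theta> = cheb_coeff \<alpha> \<beta> 0 + (\<Sum>j=1..k. cheb_coeff \<alpha> \<beta> j * cos (real j * \<theta>))"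
    by (simp add: g_partial_def sum.atLeast_Suc_atMost)
  ultimately show ?thesis
    by (simp add: sawtooth_sum_def cheb_coeff_def sum_subtractf sum.distrib sum_divide_distrib[symmetric])
qed

lemma inv_abs_minus: "inv_abs (- x) = inv_abs x"
  by (simp add: inv_abs_def)

lemma step_g_minus_g_partial_eq:
  assumes "0 \<le> \<beta>" "\<beta> < \<alpha>" "\<alpha> \<le> pi" "0 \<le> \<theta>" "\<theta> \<le> pi"
    and "\<theta> = \<beta> \<longrightarrow> 0 < \<beta>" "\<theta> = \<alpha> \<longrightarrow> \<alpha> < pi"
  shows "step_g \<alpha> \<beta> \<theta> - g_partial \<alpha> \<beta> k \<theta> =
    (sawtooth_remainder k (\<alpha>+\<theta>) + sawtooth_remainder k (\<alpha>-\<theta>)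
     - sawtooth_remainder k (\<beta>+\<theta>) - sawtooth_remainder k (\<beta>-\<theta>)) / pi"
  using step_g_eq_sawtooth[OF assms]
  by (simp add: g_partial_eq_sawtooth_sum sawtooth_remainder_def diff_divide_distrib add_divide_distrib)

lemma sawtooth_remainders_le_J_bound:
  assumes "0 \<le> \<beta>" "\<beta> < \<alpha>" "\<alpha> \<le> pi" "0 \<le> \<theta>" "\<theta> \<le> pi"
    and "\<theta> = \<beta> \<longrightarrow> 0 < \<beta>" "\<theta> = \<alpha> \<longrightarrow> \<alpha> < pi"
  shows "ereal ((real k + 1) * \<bar>sawtooth_remainder k (\<alpha>+\<theta>)\<bar>) + ereal ((real k + 1) * \<bar>sawtooth_remainder k (\<alpha>-\<theta>)\<bar>)
    + ereal ((real k + 1) * \<bar>sawtooth_remainder k (\<beta>+\<theta>)\<bar>) + ereal ((real k + 1) * \<bar>sawtooth_remainder k (\<beta>-\<theta>)\<bar>)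
    \<le> J_bound \<alpha> \<beta> \<theta>"
proof -
  define B where "B x = ereal ((real k + 1) * \<bar>sawtooth_remainder k x\<bar>)" for x
  have B_le: "B x \<le> inv_abs (sin (y/2))" if "\<bar>x\<bar> < 2*pi" "x = y \<or> x = - y" for x y
    using ereal_sawtooth_remainder_le_inv_abs[OF that(1), of k] that(2) inv_abs_minus[of "sin (y/2)"]
    by (auto simp: B_def)
  have "B 0 = 0"
    by (simp add: B_def sawtooth_remainder_def sawtooth_def sawtooth_sum_def)
  consider "\<theta> = \<alpha>" | "\<theta> = \<beta>" | "\<theta> \<noteq> \<alpha>" "\<theta> \<noteq> \<beta>" by blast
  then show ?thesis
  proof cases
    case 1
    with assms have "B (\<alpha>+\<theta>) + B (\<alpha>-\<theta>) + B (\<beta>+\<theta>) + B (\<beta>-\<theta>)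
        \<le> inv_abs (sin \<alpha>) + 0 + inv_abs (sin ((\<alpha> + \<beta>) / 2)) + inv_abs (sin ((\<alpha> - \<beta>) / 2))"
      using B_le[of "\<alpha>+\<alpha>" "\<alpha>+\<alpha>"] B_le[of "\<beta>+\<alpha>" "\<alpha>+\<beta>"] B_le[of "\<beta>-\<alpha>" "\<alpha>-\<beta>"] \<open>B 0 = 0\<close>
      by (intro add_mono) auto
    with 1 show ?thesis by (simp add: J_bound_def B_def)
  next
    case 2
    with assms have "B (\<alpha>+\<theta>) + B (\<alpha>-\<theta>) + B (\<beta>+\<theta>) + B (\<beta>-\<theta>)
        \<le> inv_abs (sin ((\<alpha> + \<beta>) / 2)) + inv_abs (sin ((\<alpha> - \<beta>) / 2)) + inv_abs (sin \<beta>) + 0"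
      using B_le[of "\<alpha>+\<beta>" "\<alpha>+\<beta>"] B_le[of "\<alpha>-\<beta>" "\<alpha>-\<beta>"] B_le[of "\<beta>+\<beta>" "\<beta>+\<beta>"] \<open>B 0 = 0\<close>
      by (intro add_mono) auto
    with 2 assms show ?thesis by (simp add: J_bound_def B_def ac_simps)
  next
    case 3
    with assms have "B (\<alpha>+\<theta>) + B (\<alpha>-\<theta>) + B (\<beta>+\<theta>) + B (\<beta>-\<theta>)
        \<le> inv_abs (sin ((\<theta> + \<alpha>) / 2)) + inv_abs (sin ((\<theta> - \<alpha>) / 2))
          + inv_abs (sin ((\<theta> + \<beta>) / 2)) + inv_abs (sin ((\<theta> - \<beta>) / 2))"
      using B_le[of "\<alpha>+\<theta>" "\<theta>+\<alpha>"] B_le[of "\<alpha>-\<theta>" "\<theta>-\<alpha>"] B_le[of "\<beta>+\<theta>" "\<theta>+\<beta>"] B_le[of "\<beta>-\<theta>" "\<theta>-\<beta>"]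
      by (intro add_mono) auto
    with 3 show ?thesis by (simp add: J_bound_def B_def)
  qed
qed

lemma abs_step_g_minus_g_partial_le_J_bound:
  assumes "0 \<le> \<beta>" "\<beta> < \<alpha>" "\<alpha> \<le> pi" "0 \<le> \<theta>" "\<theta> \<le> pi"
  shows "ereal \<bar>step_g \<alpha> \<beta> \<theta> - g_partial \<alpha> \<beta> k \<theta>\<bar> \<le> J_bound \<alpha> \<beta> \<theta> / ereal (pi * (real k + 1))"
proof (cases "\<theta> = \<alpha> \<and> \<alpha> = pi \<or> \<theta> = \<beta> \<and> \<beta> = 0")
  case True
  with assms have "J_bound \<alpha> \<beta> \<theta> = \<infinity>"
    by (auto simp: J_bound_def inv_abs_def)
  then show ?thesis by simp
next
  case False
  with assms have nondegenerate: "\<theta> = \<beta> \<longrightarrow> 0 < \<beta>" "\<theta> = \<alpha> \<longrightarrow> \<alpha> < pi"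
    by auto
  have "pi * (real k + 1) * \<bar>step_g \<alpha> \<beta> \<theta> - g_partial \<alpha> \<beta> k \<theta>\<bar>
      \<le> (real k + 1) * (\<bar>sawtooth_remainder k (\<alpha>+\<theta>)\<bar> + \<bar>sawtooth_remainder k (\<alpha>-\<theta>)\<bar>
        + \<bar>sawtooth_remainder k (\<beta>+\<theta>)\<bar> + \<bar>sawtooth_remainder k (\<beta>-\<theta>)\<bar>)"
    unfolding step_g_minus_g_partial_eq[OF assms nondegenerate]
    by (simp add: abs_divide mult_left_mono)
  also have "\<dots> \<le> J_bound \<alpha> \<beta> \<theta>"
    using sawtooth_remainders_le_J_bound[OF assms nondegenerate] by (simp add: distrib_left)
  finally show ?thesis
    by (simp add: ereal_le_divide_pos)
qed

theorem theorem3p2: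
  fixes a b \<theta> :: real and k :: nat
  assumes "-1 \<le> a" and "a < b" and "b \<le> 1"
    and "k \<ge> 1"
    and "0 \<le> \<theta>" and "\<theta> \<le> pi"
  shows "ereal \<bar>step_g (arccos a) (arccos b) \<theta> - g_partial (arccos a) (arccos b) k \<theta>\<bar>
           \<le> J_bound (arccos a) (arccos b) \<theta> / ereal (pi * (real k + 1))"
proof (rule abs_step_g_minus_g_partial_le_J_bound)
  show "0 \<le> arccos b" "arccos b < arccos a" "arccos a \<le> pi"
    using assms by (auto intro!: arccos_lbound arccos_ubound arccos_less_arccos)
qed (use assms in auto)

end
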